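(* Let $\mathcal G\in\mathbb G^4_S$ have decomposition $\mathcal G=\mathcal G_{cpi}+\mathcal G_{cyclic}$, where $\mathcal G_{cpi}$ has edge weights $\omega_j+\omega_k$ and $\mathcal G_{cyclic}=u\,\mathbf b^4_{1,4,2,3}+v\,\mathbf b^4_{1,2,3,4}$, i.e. $\mathcal G_{cyclic}$ has weights $v$ on $\{V_1,V_2\},\{V_3,V_4\}$, $u-v$ on $\{V_2,V_3\},\{V_1,V_4\}$, and $-u$ on $\{V_1,V_3\},\{V_2,V_4\}$. Let $\omega=\min(\omega_1,\omega_2,\omega_3,\omega_4)$. Then $\mathcal G$ satisfies the triangle inequality ($d_{i,k}\le d_{i,j}+d_{j,k}$ for all distinct $i,j,k$) if and only if $\omega\ge-u$, $\omega\ge v$ and $\omega\ge u-v$. In particular, if some $\omega_j<0$ then $\mathcal G$ does not satisfy the triangle inequality.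
   Context: $\mathbb G^4_S$ is the space of complete undirected weighted graphs without loops on $V_1,\dots,V_4$ with edge weights $d_{i,j}=d_{j,i}$, identified with $\mathbb R^6$ with the standard inner product. $\mathcal G_{cpi}$ is the orthogonal projection onto the subspace of graphs with $d_{j,k}=\omega_j+\omega_k$ for some reals $\omega_j$, and $\mathcal G_{cyclic}=\mathcal G-\mathcal G_{cpi}$ lies in its orthogonal complement, which is spanned by $\mathbf b^4_{1,4,2,3}$ and $\mathbf b^4_{1,2,3,4}$; here $\mathbf b^4_{i,j,k,s}$ has $d_{i,j}=1,d_{j,k}=-1,d_{k,s}=1,d_{s,i}=-1$ and other entries 0. *)

theory Defs
  imports Complex_Main
begin

text \<open>A graph in G^4_S is given by its edge weights d i j for distinct vertices
  i, j in {1..4}, with d i j = d j i. Vertices V_1..V_4 are the naturals 1..4.\<close>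

definition vert4 :: "nat set" where "vert4 = {1..4}"

definition sym_graph4 :: "(nat \<Rightarrow> nat \<Rightarrow> real) \<Rightarrow> bool" where
  "sym_graph4 d \<longleftrightarrow> (\<forall>i\<in>vert4. \<forall>j\<in>vert4. i \<noteq> j \<longrightarrow> d i j = d j i)"

definition bgraph :: "nat \<Rightarrow> nat \<Rightarrow> nat \<Rightarrow> nat \<Rightarrow> nat \<Rightarrow> nat \<Rightarrow> real" where
  "bgraph i j k s x y =
     (if {x, y} = {i, j} \<or> {x, y} = {k, s} then 1
      else if {x, y} = {j, k} \<or> {x, y} = {s, i} then -1 else 0)"

definition cpi_graph :: "(nat \<Rightarrow> real) \<Rightarrow> nat \<Rightarrow> nat \<Rightarrow> real" where
  "cpi_graph \<omega> x y = \<omega> x + \<omega> y"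

definition triangle_ineq4 :: "(nat \<Rightarrow> nat \<Rightarrow> real) \<Rightarrow> bool" where
  "triangle_ineq4 d \<longleftrightarrow>
     (\<forall>i\<in>vert4. \<forall>j\<in>vert4. \<forall>k\<in>vert4.
        i \<noteq> j \<and> j \<noteq> k \<and> i \<noteq> k \<longrightarrow> d i k \<le> d i j + d j k)"

end

theory Submission
  imports Defs
begin

text \<open>Write \<open>c\<close> for the cyclic part. It is constant on each of the three perfect
  matchings of the four vertices, with values \<open>v\<close>, \<open>u - v\<close> and \<open>-u\<close>. Hence the three
  edges at any vertex carry all three values and these sum to 0. For distinct \<open>i, j, k\<close>
  with fourth vertex \<open>l\<close> this gives \<open>c i k - c i j - c j k = 2 c j l\<close>. The triangle
  inequality through \<open>j\<close> therefore says exactly \<open>\<omega> j \<ge> c j l\<close>. Ranging over all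
  \<open>j\<close> and \<open>l\<close> this is \<open>min \<omega> \<ge> max {v, u - v, -u}\<close>, and that maximum is
  nonnegative because the three values sum to 0.\<close>

lemma vert4_eq: "vert4 = {1, 2, 3, 4}"
  unfolding vert4_def by auto

lemma card_vert4: "card vert4 = 4"
  by (simp add: vert4_eq)

lemma vert4_avoid_three:
  obtains x where "x \<in> vert4" "x \<notin> {a, b, c}"
proof -
  have "card {a, b, c} < card vert4"
    by (simp add: card_vert4 card_insert_if)
  then have "\<not> vert4 \<subseteq> {a, b, c}"
    using card_mono[of "{a, b, c}" vert4] by auto
  with that show ?thesis by blast
qed

definition cyclic4 :: "real \<Rightarrow> real \<Rightarrow> nat \<Rightarrow> nat \<Rightarrow> real" where
  "cyclic4 u v i j = u * bgraph 1 4 2 3 i j + v * bgraph 1 2 3 4 i j"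

lemma cyclic4_table:
  "cyclic4 u v 1 2 = v" "cyclic4 u v 2 1 = v" "cyclic4 u v 3 4 = v" "cyclic4 u v 4 3 = v"
  "cyclic4 u v 1 4 = u - v" "cyclic4 u v 4 1 = u - v"
  "cyclic4 u v 2 3 = u - v" "cyclic4 u v 3 2 = u - v"
  "cyclic4 u v 1 3 = - u" "cyclic4 u v 3 1 = - u" "cyclic4 u v 2 4 = - u" "cyclic4 u v 4 2 = - u"
  by (simp_all add: cyclic4_def bgraph_def doubleton_eq_iff)

text \<open>Case splits over \<open>vert4\<close> may produce \<open>Suc 0\<close> in place of \<open>1\<close>.\<close>
lemmas cyclic4_table_Suc = cyclic4_table(1,2,5,6,9,10)[unfolded One_nat_def]

lemma cyclic4_commute: "cyclic4 u v i j = cyclic4 u v j i"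
  by (simp add: cyclic4_def bgraph_def insert_commute)

lemma cyclic4_matching:
  assumes "distinct [i, j, k, l]" "{i, j, k, l} \<subseteq> vert4"
  shows "cyclic4 u v i j = cyclic4 u v k l"
  using assms unfolding vert4_eq by (auto simp: cyclic4_table cyclic4_table_Suc)

lemma cyclic4_vertex_sum:
  assumes "distinct [i, j, k, l]" "{i, j, k, l} \<subseteq> vert4"
  shows "cyclic4 u v j i + cyclic4 u v j k + cyclic4 u v j l = 0"
  using assms unfolding vert4_eq by (auto simp: cyclic4_table cyclic4_table_Suc)

lemma cyclic4_triangle_defect:
  assumes "distinct [i, j, k, l]" "{i, j, k, l} \<subseteq> vert4"
  shows "cyclic4 u v i k - cyclic4 u v i j - cyclic4 u v j k = 2 * cyclic4 u v j l"
proof -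
  have "cyclic4 u v i k = cyclic4 u v j l"
    using assms by (intro cyclic4_matching) auto
  moreover have "cyclic4 u v i j = cyclic4 u v j i"
    by (rule cyclic4_commute)
  ultimately show ?thesis
    using cyclic4_vertex_sum[OF assms, of u v] by linarith
qed

lemma cyclic4_weights_at_vertex:
  assumes "j \<in> vert4"
  shows "cyclic4 u v j ` (vert4 - {j}) = {v, u - v, - u}"
  using assms unfolding vert4_eq
  by (elim insertE emptyE) (auto simp: insert_Diff_if cyclic4_table cyclic4_table_Suc insert_commute)

lemma triangle_ineq4_cpi_cyclic_iff:
  assumes d: "\<And>i j. i \<in> vert4 \<Longrightarrow> j \<in> vert4 \<Longrightarrow> i \<noteq> j \<Longrightarrow>
      d i j = \<omega> i + \<omega> j + cyclic4 u v i j"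
  shows "triangle_ineq4 d \<longleftrightarrow>
    (\<forall>j\<in>vert4. \<forall>l\<in>vert4. l \<noteq> j \<longrightarrow> cyclic4 u v j l \<le> \<omega> j)"
proof -
  have triangle_at: "d i k \<le> d i j + d j k \<longleftrightarrow> cyclic4 u v j l \<le> \<omega> j"
    if ijkl: "distinct [i, j, k, l]" "{i, j, k, l} \<subseteq> vert4" for i j k l
  proof -
    have "d i k = \<omega> i + \<omega> k + cyclic4 u v i k" "d i j = \<omega> i + \<omega> j + cyclic4 u v i j"
      "d j k = \<omega> j + \<omega> k + cyclic4 u v j k"
      using ijkl by (auto intro: d)
    then show ?thesis
      using cyclic4_triangle_defect[OF ijkl, of u v] by linarith
  qed
  show ?thesis
  proof
    assume tri: "triangle_ineq4 d"
    show "\<forall>j\<in>vert4. \<forall>l\<in>vert4. l \<noteq> j \<longrightarrow> cyclic4 u v j l \<le> \<omega> j"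
    proof (intro ballI impI)
      fix j l assume jl: "j \<in> vert4" "l \<in> vert4" "l \<noteq> j"
      obtain i where i: "i \<in> vert4" "i \<notin> {j, l}"
        using vert4_avoid_three[of j l l] by auto
      obtain k where k: "k \<in> vert4" "k \<notin> {i, j, l}"
        by (rule vert4_avoid_three)
      have "d i k \<le> d i j + d j k"
        using tri i k jl unfolding triangle_ineq4_def by auto
      with triangle_at[of i j k l] i k jl show "cyclic4 u v j l \<le> \<omega> j" by auto
    qed
  next
    assume bound: "\<forall>j\<in>vert4. \<forall>l\<in>vert4. l \<noteq> j \<longrightarrow> cyclic4 u v j l \<le> \<omega> j"
    show "triangle_ineq4 d"
      unfolding triangle_ineq4_def
    proof (intro ballI impI)
      fix i j k assume ijk: "i \<in> vert4" "j \<in> vert4" "k \<in> vert4" "i \<noteq> j \<and> j \<noteq> k \<and> i \<noteq> k"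
      obtain l where l: "l \<in> vert4" "l \<notin> {i, j, k}"
        by (rule vert4_avoid_three)
      with bound ijk triangle_at[of i j k l] show "d i k \<le> d i j + d j k" by auto
    qed
  qed
qed

theorem theorem17:
  fixes d :: "nat \<Rightarrow> nat \<Rightarrow> real" and \<omega> :: "nat \<Rightarrow> real" and u v :: real
  assumes "sym_graph4 d"
    and decomp: "\<forall>i\<in>vert4. \<forall>j\<in>vert4. i \<noteq> j \<longrightarrow>
        d i j = cpi_graph \<omega> i j + u * bgraph 1 4 2 3 i j + v * bgraph 1 2 3 4 i j"
  shows "(triangle_ineq4 d \<longleftrightarrow>
            (Min (\<omega> ` vert4) \<ge> - u \<and> Min (\<omega> ` vert4) \<ge> v \<and> Min (\<omega> ` vert4) \<ge> u - v))
       \<and> ((\<exists>j\<in>vert4. \<omega> j < 0) \<longrightarrow> \<not> triangle_ineq4 d)"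
proof -
  have image_\<omega>: "finite (\<omega> ` vert4)" "\<omega> ` vert4 \<noteq> {}"
    by (simp_all add: vert4_eq)
  have "triangle_ineq4 d \<longleftrightarrow>
      (\<forall>j\<in>vert4. \<forall>l\<in>vert4. l \<noteq> j \<longrightarrow> cyclic4 u v j l \<le> \<omega> j)"
    using decomp by (intro triangle_ineq4_cpi_cyclic_iff) (simp add: cpi_graph_def cyclic4_def)
  also have "\<dots> \<longleftrightarrow> (\<forall>j\<in>vert4. \<forall>c\<in>cyclic4 u v j ` (vert4 - {j}). c \<le> \<omega> j)"
    by auto
  also have "\<dots> \<longleftrightarrow> (\<forall>j\<in>vert4. \<forall>c\<in>{v, u - v, - u}. c \<le> \<omega> j)"
    by (simp add: cyclic4_weights_at_vertex)
  also have "\<dots> \<longleftrightarrow> (\<forall>c\<in>{v, u - v, - u}. c \<le> Min (\<omega> ` vert4))"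
    by (auto simp: Min_ge_iff[OF image_\<omega>])
  finally have tri: "triangle_ineq4 d \<longleftrightarrow>
      Min (\<omega> ` vert4) \<ge> - u \<and> Min (\<omega> ` vert4) \<ge> v \<and> Min (\<omega> ` vert4) \<ge> u - v"
    by auto
  have "\<not> triangle_ineq4 d" if "j \<in> vert4" "\<omega> j < 0" for j
  proof -
    have "Min (\<omega> ` vert4) < 0"
      using that Min_le[OF image_\<omega>(1), of "\<omega> j"] by simp
    then show ?thesis
      unfolding tri by linarith
  qed
  with tri show ?thesis by blast
qed

end
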